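(* Let $m,n\ge1$. The set of monomials \[\Big\{\prod_{i,j}\eta_{ij}^{a_{ij}}\xi_{ij}^{b_{ij}}\ \Big|\ \text{for every } i:\ \big(\exists j \text{ with } a_{ij}>0 \text{ or } b_{ij}>0\big)\Rightarrow\big(a_{ik}>0\text{ for all }k\big)\Big\}\] (with $a_{ij},b_{ij}\in\mathbb{N}$) is an $\mathbb{R}$-basis of $R^m_n$.
   Context: $\eta_{ij},\xi_{ij}$ ($1\le i\le m$, $1\le j\le n$) are independent variables. $R^m_n$ is the set of polynomials $f\in\mathbb{R}[\eta_{ij},\xi_{ij}]$ such that for every $i\in\{1,\dots,m\}$ and every $k\in\{1,\dots,n\}$, the polynomial obtained from $f$ by substituting $\eta_{ik}=0$ does not depend on any of the variables $\xi_{ij}$ ($1\le j\le n$) or $\eta_{ij}$ ($j\ne k$). $R^m_n$ is a subring (in particular an $\mathbb{R}$-subspace) of the polynomial ring. *)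

theory Defs
  imports Complex_Main "HOL-Library.Poly_Mapping"
begin

datatype var = Eta nat nat | Xi nat nat

type_synonym mono = "var \<Rightarrow>\<^sub>0 nat"
type_synonym rpoly = "mono \<Rightarrow>\<^sub>0 real"

definition in_range :: "nat \<Rightarrow> nat \<Rightarrow> var \<Rightarrow> bool" where
  "in_range m n v = (case v of Eta i j \<Rightarrow> i \<in> {1..m} \<and> j \<in> {1..n}
                              | Xi i j \<Rightarrow> i \<in> {1..m} \<and> j \<in> {1..n})"

definition valid_mono :: "nat \<Rightarrow> nat \<Rightarrow> mono \<Rightarrow> bool" where
  "valid_mono m n \<mu> = (\<forall>v. Poly_Mapping.lookup \<mu> v > 0 \<longrightarrow> in_range m n v)"

definition poly_ring :: "nat \<Rightarrow> nat \<Rightarrow> rpoly set" where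
  "poly_ring m n = {p. \<forall>\<mu>\<in>Poly_Mapping.keys p. valid_mono m n \<mu>}"

lift_definition subst_zero :: "var \<Rightarrow> rpoly \<Rightarrow> rpoly" is
  "\<lambda>x p \<mu>. if Poly_Mapping.lookup \<mu> x = 0 then p \<mu> else 0"
  by (erule finite_subset[rotated]) auto

definition depends_on :: "rpoly \<Rightarrow> var \<Rightarrow> bool" where
  "depends_on p x = (\<exists>\<mu>\<in>Poly_Mapping.keys p. Poly_Mapping.lookup \<mu> x > 0)"

definition Rmn :: "nat \<Rightarrow> nat \<Rightarrow> rpoly set" where
  "Rmn m n = {f \<in> poly_ring m n. \<forall>i\<in>{1..m}. \<forall>k\<in>{1..n}.
      (\<forall>j\<in>{1..n}. \<not> depends_on (subst_zero (Eta i k) f) (Xi i j)) \<and>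
      (\<forall>j\<in>{1..n}. j \<noteq> k \<longrightarrow> \<not> depends_on (subst_zero (Eta i k) f) (Eta i j))}"

definition rscale :: "real \<Rightarrow> rpoly \<Rightarrow> rpoly" where
  "rscale c p = Poly_Mapping.map (\<lambda>a. c * a) p"

definition mono_poly :: "mono \<Rightarrow> rpoly" where
  "mono_poly \<mu> = Poly_Mapping.single \<mu> 1"

definition good_mono :: "nat \<Rightarrow> nat \<Rightarrow> mono \<Rightarrow> bool" where
  "good_mono m n \<mu> = (valid_mono m n \<mu> \<and>
     (\<forall>i\<in>{1..m}. (\<exists>j\<in>{1..n}. Poly_Mapping.lookup \<mu> (Eta i j) > 0 \<or> Poly_Mapping.lookup \<mu> (Xi i j) > 0)
        \<longrightarrow> (\<forall>k\<in>{1..n}. Poly_Mapping.lookup \<mu> (Eta i k) > 0)))"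

end

theory Submission
  imports Defs
begin

text \<open>Substituting \<open>\<eta>\<^sub>i\<^sub>k = 0\<close> deletes exactly the monomials containing \<open>\<eta>\<^sub>i\<^sub>k\<close> and keeps
  the others unchanged, so the defining condition of \<open>R^m_n\<close> is a condition on each
  monomial of \<open>f\<close> separately: a monomial of \<open>f\<close> without \<open>\<eta>\<^sub>i\<^sub>k\<close> contains no other
  variable of row \<open>i\<close>. This says precisely that the monomial is good, so \<open>R^m_n\<close> is the
  coordinate subspace of the polynomials supported on good monomials, and the monomials
  form a basis of the whole polynomial ring.\<close>

lemma lookup_rscale [simp]: "Poly_Mapping.lookup (rscale c p) \<mu> = c * Poly_Mapping.lookup p \<mu>"
  unfolding rscale_def by transfer (simp add: when_def)

lemma module_rscale: "module rscale"
  by standard (auto intro!: poly_mapping_eqI simp: lookup_add algebra_simps)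

lemma keys_rscale_subset: "Poly_Mapping.keys (rscale c p) \<subseteq> Poly_Mapping.keys p"
  by (auto simp: in_keys_iff)

lemma lookup_mono_poly: "Poly_Mapping.lookup (mono_poly \<mu>) \<nu> = (if \<mu> = \<nu> then 1 else 0)"
  by (simp add: mono_poly_def lookup_single when_def)

lemma mono_poly_eq_iff: "mono_poly \<mu> = mono_poly \<nu> \<longleftrightarrow> \<mu> = \<nu>"
  by (metis lookup_mono_poly zero_neq_one)

lemma rpoly_monomial_expansion:
  "(p :: rpoly) = (\<Sum>\<mu>\<in>Poly_Mapping.keys p. rscale (Poly_Mapping.lookup p \<mu>) (mono_poly \<mu>))"
  by (rule poly_mapping_eqI)
    (simp add: lookup_sum lookup_mono_poly in_keys_iff if_distrib[of "\<lambda>z. _ * z"] cong: if_cong)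

lemma span_mono_poly: "module.span rscale (mono_poly ` S) = {p. Poly_Mapping.keys p \<subseteq> S}"
proof -
  interpret rpoly: module rscale by (rule module_rscale)
  have "{p. Poly_Mapping.keys p \<subseteq> S} \<subseteq> rpoly.span (mono_poly ` S)"
  proof
    fix p :: rpoly assume "p \<in> {p. Poly_Mapping.keys p \<subseteq> S}"
    then have "(\<Sum>\<mu>\<in>Poly_Mapping.keys p. rscale (Poly_Mapping.lookup p \<mu>) (mono_poly \<mu>))
        \<in> rpoly.span (mono_poly ` S)"
      by (intro rpoly.span_sum rpoly.span_scale rpoly.span_base) auto
    then show "p \<in> rpoly.span (mono_poly ` S)"
      using rpoly_monomial_expansion by simp
  qed
  moreover have "rpoly.subspace {p. Poly_Mapping.keys p \<subseteq> S}"
    by (intro rpoly.subspaceI) (auto dest: subsetD[OF keys_add] subsetD[OF keys_rscale_subset])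
  moreover have "mono_poly ` S \<subseteq> {p. Poly_Mapping.keys p \<subseteq> S}"
    by (auto simp: mono_poly_def)
  ultimately show ?thesis
    by (intro rpoly.span_subspace)
qed

lemma independent_mono_poly: "module.independent rscale (range mono_poly)"
  unfolding module.independent_explicit_module[OF module_rscale]
proof (intro allI impI)
  fix t u v
  assume t: "finite t" "t \<subseteq> range mono_poly" and sum_zero: "(\<Sum>w\<in>t. rscale (u w) w) = 0"
    and "v \<in> t"
  then obtain \<nu> where v: "v = mono_poly \<nu>" by auto
  have coeff: "Poly_Mapping.lookup w \<nu> = (if w = v then 1 else 0)" if "w \<in> t" for w
  proof -
    from that t(2) obtain \<mu> where "w = mono_poly \<mu>" by auto
    then show ?thesis by (simp add: v lookup_mono_poly mono_poly_eq_iff)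
  qed
  have "0 = Poly_Mapping.lookup (\<Sum>w\<in>t. rscale (u w) w) \<nu>"
    using sum_zero by simp
  also have "\<dots> = (\<Sum>w\<in>t. u w * Poly_Mapping.lookup w \<nu>)"
    by (simp add: lookup_sum)
  also have "\<dots> = (\<Sum>w\<in>t. if w = v then u w else 0)"
    by (rule sum.cong) (simp_all add: coeff)
  also have "\<dots> = u v"
    using t(1) \<open>v \<in> t\<close> by simp
  finally show "u v = 0" by simp
qed

lemma row_occupied_imp_full_iff:
  fixes a b :: "'j \<Rightarrow> nat"
  shows "((\<exists>j\<in>J. a j > 0 \<or> b j > 0) \<longrightarrow> (\<forall>k\<in>J. a k > 0)) \<longleftrightarrow>
    (\<forall>k\<in>J. a k = 0 \<longrightarrow> (\<forall>j\<in>J. b j = 0 \<and> (j \<noteq> k \<longrightarrow> a j = 0)))"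
    (is "?rows_full \<longleftrightarrow> ?rows_vanish")
proof
  assume full: ?rows_full
  show ?rows_vanish
  proof (intro ballI impI)
    fix k j assume "k \<in> J" "a k = 0" "j \<in> J"
    then have "\<not> (\<forall>k\<in>J. a k > 0)"
      by auto
    with full \<open>j \<in> J\<close> have "\<not> (a j > 0 \<or> b j > 0)"
      by blast
    then show "b j = 0 \<and> (j \<noteq> k \<longrightarrow> a j = 0)"
      by simp
  qed
next
  assume vanish: ?rows_vanish
  show ?rows_full
  proof (intro impI ballI)
    fix k assume "\<exists>j\<in>J. a j > 0 \<or> b j > 0" and "k \<in> J"
    then obtain j where "j \<in> J" and nonzero: "a j > 0 \<or> b j > 0" by blast
    show "a k > 0"
    proof (rule gr0I)
      assume "a k = 0"
      then have "b j = 0 \<and> (j \<noteq> k \<longrightarrow> a j = 0)"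
        using vanish \<open>k \<in> J\<close> \<open>j \<in> J\<close> by blast
      with nonzero \<open>a k = 0\<close> show False
        by (cases "j = k") auto
    qed
  qed
qed

lemma good_mono_iff:
  "good_mono m n \<mu> \<longleftrightarrow> valid_mono m n \<mu> \<and>
     (\<forall>i\<in>{1..m}. \<forall>k\<in>{1..n}. Poly_Mapping.lookup \<mu> (Eta i k) = 0 \<longrightarrow>
        (\<forall>j\<in>{1..n}. Poly_Mapping.lookup \<mu> (Xi i j) = 0 \<and>
                    (j \<noteq> k \<longrightarrow> Poly_Mapping.lookup \<mu> (Eta i j) = 0)))"
  unfolding good_mono_def row_occupied_imp_full_iff ..

lemma good_mono_rowD:
  assumes "good_mono m n \<mu>" "i \<in> {1..m}" "k \<in> {1..n}" "j \<in> {1..n}"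
    and "Poly_Mapping.lookup \<mu> (Eta i k) = 0"
  shows "Poly_Mapping.lookup \<mu> (Xi i j) = 0 \<and> (j \<noteq> k \<longrightarrow> Poly_Mapping.lookup \<mu> (Eta i j) = 0)"
  using assms(1)[unfolded good_mono_iff, THEN conjunct2, rule_format, OF assms(2,3,5,4)] .

lemma lookup_subst_zero:
  "Poly_Mapping.lookup (subst_zero x p) \<mu>
     = (if Poly_Mapping.lookup \<mu> x = 0 then Poly_Mapping.lookup p \<mu> else 0)"
  by transfer simp

lemma not_depends_on_subst_zero_iff:
  "\<not> depends_on (subst_zero x f) y
     \<longleftrightarrow> (\<forall>\<mu>\<in>Poly_Mapping.keys f. Poly_Mapping.lookup \<mu> x = 0 \<longrightarrow> Poly_Mapping.lookup \<mu> y = 0)"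
  unfolding depends_on_def by (auto simp: in_keys_iff lookup_subst_zero split: if_splits)

lemma good_mono_if_in_Rmn:
  assumes f: "f \<in> Rmn m n" and \<mu>: "\<mu> \<in> Poly_Mapping.keys f"
  shows "good_mono m n \<mu>"
proof -
  from f have ring: "f \<in> poly_ring m n"
    and cond: "\<And>i k j. i \<in> {1..m} \<Longrightarrow> k \<in> {1..n} \<Longrightarrow> j \<in> {1..n} \<Longrightarrow>
      \<not> depends_on (subst_zero (Eta i k) f) (Xi i j) \<and>
      (j \<noteq> k \<longrightarrow> \<not> depends_on (subst_zero (Eta i k) f) (Eta i j))"
    unfolding Rmn_def by auto
  have "valid_mono m n \<mu>"
    using ring \<mu> by (simp add: poly_ring_def)
  moreover have "Poly_Mapping.lookup \<mu> (Xi i j) = 0 \<and> (j \<noteq> k \<longrightarrow> Poly_Mapping.lookup \<mu> (Eta i j) = 0)"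
    if "i \<in> {1..m}" "k \<in> {1..n}" "j \<in> {1..n}" "Poly_Mapping.lookup \<mu> (Eta i k) = 0" for i k j
    using cond[OF that(1-3)] \<mu> that(4) by (simp add: not_depends_on_subst_zero_iff)
  ultimately show ?thesis
    by (simp add: good_mono_iff)
qed

lemma in_Rmn_if_keys_good:
  assumes good: "\<And>\<mu>. \<mu> \<in> Poly_Mapping.keys f \<Longrightarrow> good_mono m n \<mu>"
  shows "f \<in> Rmn m n"
proof -
  have "valid_mono m n \<mu>" if "\<mu> \<in> Poly_Mapping.keys f" for \<mu>
    using good[OF that] unfolding good_mono_def by (rule conjunct1)
  then have ring: "f \<in> poly_ring m n"
    by (simp add: poly_ring_def)
  have indep: "\<not> depends_on (subst_zero (Eta i k) f) (Xi i j) \<and>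
      (j \<noteq> k \<longrightarrow> \<not> depends_on (subst_zero (Eta i k) f) (Eta i j))"
    if ikj: "i \<in> {1..m}" "k \<in> {1..n}" "j \<in> {1..n}" for i k j
  proof -
    have "Poly_Mapping.lookup \<mu> (Xi i j) = 0 \<and> (j \<noteq> k \<longrightarrow> Poly_Mapping.lookup \<mu> (Eta i j) = 0)"
      if "\<mu> \<in> Poly_Mapping.keys f" "Poly_Mapping.lookup \<mu> (Eta i k) = 0" for \<mu>
      using good_mono_rowD[OF good[OF that(1)] ikj that(2)] .
    then show ?thesis
      by (simp add: not_depends_on_subst_zero_iff)
  qed
  show ?thesis
    unfolding Rmn_def using ring indep by blast
qed

lemma Rmn_eq_keys_good: "Rmn m n = {f. Poly_Mapping.keys f \<subseteq> {\<mu>. good_mono m n \<mu>}}"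
proof
  show "Rmn m n \<subseteq> {f. Poly_Mapping.keys f \<subseteq> {\<mu>. good_mono m n \<mu>}}"
    using good_mono_if_in_Rmn by blast
  show "{f. Poly_Mapping.keys f \<subseteq> {\<mu>. good_mono m n \<mu>}} \<subseteq> Rmn m n"
    using in_Rmn_if_keys_good by blast
qed

theorem proposition2p6:
  fixes m n :: nat
  assumes "m \<ge> 1" and "n \<ge> 1"
  shows "Modules.module.independent rscale (mono_poly ` {\<mu>. good_mono m n \<mu>})
       \<and> Modules.module.span rscale (mono_poly ` {\<mu>. good_mono m n \<mu>}) = Rmn m n"
proof
  have "mono_poly ` {\<mu>. good_mono m n \<mu>} \<subseteq> range mono_poly"
    by (rule image_mono) simp
  then show "module.independent rscale (mono_poly ` {\<mu>. good_mono m n \<mu>})"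
    by (rule module.independent_mono[OF module_rscale independent_mono_poly])
  show "module.span rscale (mono_poly ` {\<mu>. good_mono m n \<mu>}) = Rmn m n"
    by (simp add: span_mono_poly Rmn_eq_keys_good)
qed

end
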